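(* Let $S$ be the group $\mathbb{Z}/2$, viewed as a semigroup. The category $\mathbf{OI}_{++ep}/N(S)$ is Gröbner.
   Context: Gröbner categories. Let $\mathcal{C}$ be a small category and $c$ an object. An admissible order on the morphisms out of $c$ is a choice, for every object $c'$, of a well-order $\preceq_{c'}$ on $\mathrm{Hom}(c,c')$ such that $f\prec_{c'} f'$ implies $g\circ f\prec_{c''} g\circ f'$ for all $g:c'\to c''$. On morphisms out of $c$ put the preorder $f\le g$ iff $g=h\circ f$ for some $h$; $|c/\mathcal{C}|$ is the associated poset. A poset is Noetherian if every sequence $x_1,x_2,\dots$ has $i<j$ with $x_i\le x_j$. $\mathcal{C}$ is Gröbner if for every object $c$: (G1) morphisms out of $c$ admit an admissible order, and (G2) $|c/\mathcal{C}|$ is Noetherian. $\mathbf{OI}_{++ep}$ is the category of finite ordinals $[n]=\{0<1<\dots<n\}$ with $n\ge1$ and order-preserving injections preserving both endpoints. $N(S)$ assigns $S^n$ to $[n]$, and for such $\varphi:[n]\to[m]$, $N(S)(\varphi)(t_1,\dots,t_m)=(s_1,\dots,s_n)$ with $s_i=t_{\varphi(i-1)+1}\cdots t_{\varphi(i)}$. $\mathbf{OI}_{++ep}/N(S)$ is its category of elements: objects are non-empty finite sequences $(s_1,\dots,s_n)$ in $S$; a morphism $(s_1,\dots,s_n)\to(t_1,\dots,t_m)$ is an endpoint-preserving injection $\varphi:[n]\to[m]$ with $N(S)(\varphi)(t_1,\dots,t_m)=(s_1,\dots,s_n)$. *)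

theory Defs
  imports Main "HOL-Library.Numeral_Type"
begin

text \<open>A small category is presented by a set of objects Ob, hom-sets Hom a b, and
  composition cmp g f (meaning g after f).\<close>

definition admissible_order ::
  "'o set \<Rightarrow> ('o \<Rightarrow> 'o \<Rightarrow> 'm set) \<Rightarrow> ('m \<Rightarrow> 'm \<Rightarrow> 'm) \<Rightarrow> 'o \<Rightarrow> ('o \<Rightarrow> 'm rel) \<Rightarrow> bool" where
  "admissible_order Ob Hom cmp c R \<longleftrightarrow>
     (\<forall>c'\<in>Ob. well_order_on (Hom c c') (R c')) \<and>
     (\<forall>c'\<in>Ob. \<forall>c''\<in>Ob. \<forall>f\<in>Hom c c'. \<forall>f'\<in>Hom c c'. \<forall>g\<in>Hom c' c''.
        ((f, f') \<in> R c' \<and> f \<noteq> f') \<longrightarrow>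
        ((cmp g f, cmp g f') \<in> R c'' \<and> cmp g f \<noteq> cmp g f'))"

definition out_mor :: "'o set \<Rightarrow> ('o \<Rightarrow> 'o \<Rightarrow> 'm set) \<Rightarrow> 'o \<Rightarrow> ('o \<times> 'm) set" where
  "out_mor Ob Hom c = {(c', f). c' \<in> Ob \<and> f \<in> Hom c c'}"

definition under_le :: "('o \<Rightarrow> 'o \<Rightarrow> 'm set) \<Rightarrow> ('m \<Rightarrow> 'm \<Rightarrow> 'm) \<Rightarrow> 'o \<times> 'm \<Rightarrow> 'o \<times> 'm \<Rightarrow> bool" where
  "under_le Hom cmp x y \<longleftrightarrow> (\<exists>h\<in>Hom (fst x) (fst y). snd y = cmp h (snd x))"

definition noetherian_on :: "'a set \<Rightarrow> ('a \<Rightarrow> 'a \<Rightarrow> bool) \<Rightarrow> bool" where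
  "noetherian_on A le \<longleftrightarrow> (\<forall>x::nat \<Rightarrow> 'a. (\<forall>i. x i \<in> A) \<longrightarrow> (\<exists>i j. i < j \<and> le (x i) (x j)))"

definition groebner_cat :: "'o set \<Rightarrow> ('o \<Rightarrow> 'o \<Rightarrow> 'm set) \<Rightarrow> ('m \<Rightarrow> 'm \<Rightarrow> 'm) \<Rightarrow> bool" where
  "groebner_cat Ob Hom cmp \<longleftrightarrow>
     (\<forall>c\<in>Ob. (\<exists>R. admissible_order Ob Hom cmp c R) \<and>
              noetherian_on (out_mor Ob Hom c) (under_le Hom cmp))"

text \<open>Objects: non-empty lists (s_1,...,s_n) (list index i-1 holds s_i).
  A morphism s \<rightarrow> t (n = length s, m = length t) is an order-preserving injection
  \<phi> : [n] \<rightarrow> [m] preserving both endpoints, encoded as the list [\<phi> 0, ..., \<phi> n],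
  such that s_i = t_{\<phi>(i-1)+1} \<cdots> t_{\<phi>(i)} for 1 \<le> i \<le> n.
  The semigroup S is written additively (Z/2 is abelian); the segment products are
  over non-empty segments, so only the semigroup structure matters.\<close>

definition seg_sum :: "'a::monoid_add list \<Rightarrow> nat \<Rightarrow> nat \<Rightarrow> 'a" where
  "seg_sum t a b = sum_list (take (b - a) (drop a t))"   \<comment> \<open>t_{a+1} + ... + t_b\<close>

definition elt_obj :: "'a list set" where
  "elt_obj = {s. s \<noteq> []}"

definition elt_hom :: "'a::monoid_add list \<Rightarrow> 'a list \<Rightarrow> nat list set" where
  "elt_hom s t = {phi. length phi = Suc (length s) \<and> sorted_wrt (<) phi \<and>
                      phi ! 0 = 0 \<and> phi ! length s = length t \<and>
                      (\<forall>i < length s. s ! i = seg_sum t (phi ! i) (phi ! Suc i))}"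

definition elt_comp :: "nat list \<Rightarrow> nat list \<Rightarrow> nat list" where
  "elt_comp g f = map (\<lambda>i. g ! i) f"

end

theory Submission
  imports Defs "HOL-Library.Sublist" "HOL-Library.Infinite_Set" "HOL-Library.List_Lexorder"
begin

(* Hom-sets are finite sets of strictly increasing lists, and post-composition with a strictly
   increasing map preserves the lexicographic order; hence the lexicographic order on each
   hom-set is an admissible order.

   For Noetherianity, write S additively; the argument works for every finite group S. Since S
   is cancellative, phi : s -> t is a morphism iff the prefix sums of s are the prefix sums of t
   at the positions phi(i). Encode phi as the word over the finite alphabet
   S x {0..|s|+1} x bool whose j-th letter (1 <= j <= |t|) records the prefix sum t_1 + ... + t_j,
   the number of i with phi(i) < j, and whether j is in the image of phi. An embedding of the
   word of phi : s -> t into the word of psi : s -> u as a subsequence, read as a map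
   j |-> (position of the image of letter j), is a morphism h : t -> u with h o phi = psi: the
   first components make h a morphism, the second and third force h(phi(i)) = psi(i). So
   Higman's lemma for words over a finite alphabet yields Noetherianity. *)

section \<open>Higman's lemma\<close>

definition bad_seq :: "'a set \<Rightarrow> ('a \<Rightarrow> 'a \<Rightarrow> bool) \<Rightarrow> (nat \<Rightarrow> 'a) \<Rightarrow> bool" where
  "bad_seq A P f \<longleftrightarrow> (\<forall>i. f i \<in> A) \<and> (\<forall>i j. i < j \<longrightarrow> \<not> P (f i) (f j))"

lemma noetherian_on_iff_no_bad_seq: "noetherian_on A P \<longleftrightarrow> (\<forall>f. \<not> bad_seq A P f)"
  unfolding noetherian_on_def bad_seq_def by blast

lemma bad_seq_if_prefixes_extend:
  assumes "\<And>n. \<exists>g. bad_seq A P g \<and> (\<forall>i<n. g i = m i)"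
  shows "bad_seq A P m"
  unfolding bad_seq_def
proof (intro conjI allI impI)
  fix i j :: nat assume "i < j"
  from assms[of "Suc j"] obtain g where g: "bad_seq A P g" "\<forall>k<Suc j. g k = m k"
    by blast
  with \<open>i < j\<close> have "g i = m i" "g j = m j" by simp_all
  moreover have "\<not> P (g i) (g j)" using g(1) \<open>i < j\<close> by (simp add: bad_seq_def)
  ultimately show "\<not> P (m i) (m j)" by simp
next
  fix i
  from assms[of "Suc i"] obtain g where "bad_seq A P g" "g i = m i"
    by auto
  then show "m i \<in> A" unfolding bad_seq_def by metis
qed

lemma ex_minimal_bad_seq:
  fixes weight :: "'a \<Rightarrow> nat"
  assumes "bad_seq A P f"
  obtains m where "bad_seq A P m"
    and "\<And>n g. bad_seq A P g \<Longrightarrow> \<forall>i<n. g i = m i \<Longrightarrow> weight (m n) \<le> weight (g n)"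
proof -
  define extensible where
    "extensible xs \<longleftrightarrow> (\<exists>g. bad_seq A P g \<and> (\<forall>i<length xs. g i = xs ! i))" for xs
  define nxt where
    "nxt xs = (SOME w. extensible (xs @ [w]) \<and> (\<forall>w'. extensible (xs @ [w']) \<longrightarrow> weight w \<le> weight w'))"
    for xs
  have nxt: "extensible (xs @ [nxt xs]) \<and> (\<forall>w'. extensible (xs @ [w']) \<longrightarrow> weight (nxt xs) \<le> weight w')"
    if "extensible xs" for xs
  proof -
    from that obtain g where "bad_seq A P g" "\<forall>i<length xs. g i = xs ! i"
      unfolding extensible_def by blast
    then have "extensible (xs @ [g (length xs)])"
      unfolding extensible_def by (auto simp: nth_append less_Suc_eq)
    then have "\<exists>w. extensible (xs @ [w]) \<and> (\<forall>w'. extensible (xs @ [w']) \<longrightarrow> weight w \<le> weight w')"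
      by (rule ex_has_least_nat)
    then show ?thesis unfolding nxt_def by (rule someI_ex)
  qed
  define m where "m n = nxt (((\<lambda>xs. xs @ [nxt xs]) ^^ n) [])" for n
  have prefix_m: "((\<lambda>xs. xs @ [nxt xs]) ^^ n) [] = map m [0..<n]" for n
    by (induction n) (simp_all add: m_def)
  have m_rec: "m n = nxt (map m [0..<n])" for n
    by (simp add: m_def prefix_m)
  have extensible_m: "extensible (map m [0..<n])" for n
  proof (induction n)
    case 0
    show ?case using assms by (auto simp: extensible_def)
  next
    case (Suc n)
    then show ?case using nxt[OF Suc] m_rec[of n] by simp
  qed
  show thesis
  proof
    show "bad_seq A P m"
      using extensible_m by (intro bad_seq_if_prefixes_extend) (simp add: extensible_def)
  next
    fix n g assume "bad_seq A P g" "\<forall>i<n. g i = m i"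
    then have "extensible (map m [0..<n] @ [g n])"
      unfolding extensible_def by (auto simp: nth_append less_Suc_eq)
    with nxt[OF extensible_m[of n]] show "weight (m n) \<le> weight (g n)"
      unfolding m_rec[of n] by blast
  qed
qed

lemma bad_seq_replace_by_tails:
  fixes m :: "nat \<Rightarrow> 'a list" and r :: "nat \<Rightarrow> nat"
  defines "g \<equiv> \<lambda>i. if i < r 0 then m i else tl (m (r (i - r 0)))"
  assumes bad_m: "bad_seq (lists A) subseq m" and r_mono: "strict_mono r"
    and m_r: "\<And>k. a # tl (m (r k)) = m (r k)"
  shows "bad_seq (lists A) subseq g"
  unfolding bad_seq_def
proof (intro conjI allI impI)
  fix i
  have "tl xs \<in> lists A" if "xs \<in> lists A" for xs
    using that by (cases xs) auto
  then show "g i \<in> lists A" using bad_m by (simp add: bad_seq_def g_def)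
next
  fix i j :: nat assume "i < j"
  show "\<not> subseq (g i) (g j)"
  proof (cases "r 0 \<le> i")
    case True
    have "r (i - r 0) < r (j - r 0)"
      using r_mono True \<open>i < j\<close> by (simp add: strict_mono_less)
    then have "\<not> subseq (m (r (i - r 0))) (m (r (j - r 0)))"
      using bad_m by (simp add: bad_seq_def)
    then have "\<not> subseq (a # tl (m (r (i - r 0)))) (a # tl (m (r (j - r 0))))"
      unfolding m_r .
    then show ?thesis using True \<open>i < j\<close> by (simp add: g_def)
  next
    case False
    obtain j' where "i < j'" "subseq (g j) (m j')"
    proof (cases "j < r 0")
      case True
      then show thesis using that[of j] \<open>i < j\<close> by (simp add: g_def)
    next
      case False
      have "r 0 \<le> r (j - r 0)" using r_mono by (simp add: strict_mono_less_eq)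
      then show thesis
        using that[of "r (j - r 0)"] False \<open>\<not> r 0 \<le> i\<close> by (simp add: g_def suffix_imp_subseq)
    qed
    moreover have "\<not> subseq (m i) (m j')" using bad_m \<open>i < j'\<close> by (simp add: bad_seq_def)
    moreover have "g i = m i" using False by (simp add: g_def)
    ultimately show ?thesis by (metis subseq_order.trans)
  qed
qed

(* Nash-Williams' minimal bad sequence argument *)
lemma noetherian_on_lists_subseq:
  assumes "finite A"
  shows "noetherian_on (lists A) subseq"
proof (rule ccontr)
  assume "\<not> ?thesis"
  then obtain f where "bad_seq (lists A) subseq f"
    by (auto simp: noetherian_on_iff_no_bad_seq)
  then obtain m where bad_m: "bad_seq (lists A) subseq m"
    and min_m: "\<And>n g. bad_seq (lists A) subseq g \<Longrightarrow> \<forall>i<n. g i = m i \<Longrightarrow> length (m n) \<le> length (g n)"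
    by (rule ex_minimal_bad_seq[of "lists A" subseq f length]) (rule that)
  have m_lists: "m i \<in> lists A" for i
    using bad_m by (simp add: bad_seq_def)
  have m_ne: "m i \<noteq> []" for i
  proof
    assume "m i = []"
    then have "subseq (m i) (m (Suc i))" by simp
    with bad_m show False unfolding bad_seq_def using lessI by blast
  qed
  have "hd (m i) \<in> A" for i
    using m_lists[of i] hd_in_set[OF m_ne[of i]] by (simp add: in_lists_conv_set)
  then have "finite (range (\<lambda>i. hd (m i)))"
    using assms finite_subset[of "range (\<lambda>i. hd (m i))" A] by blast
  from pigeonhole_infinite[OF infinite_UNIV_nat this]
  obtain i0 where "infinite {i. hd (m i) = hd (m i0)}" by auto
  from infinite_enumerate[OF this]
  obtain r :: "nat \<Rightarrow> nat" where r_mono: "strict_mono r" and r_hd: "\<And>k. hd (m (r k)) = hd (m i0)"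
    by blast
  have "hd (m i0) # tl (m (r k)) = m (r k)" for k
    using list.collapse[OF m_ne[of "r k"]] r_hd by simp
  with bad_m r_mono have "bad_seq (lists A) subseq (\<lambda>i. if i < r 0 then m i else tl (m (r (i - r 0))))"
    by (rule bad_seq_replace_by_tails)
  from min_m[OF this, of "r 0"] m_ne[of "r 0"] show False
    by (cases "m (r 0)") simp_all
qed

section \<open>Morphisms via prefix sums\<close>

definition prefix_sum :: "'a::monoid_add list \<Rightarrow> nat \<Rightarrow> 'a" where
  "prefix_sum t j = sum_list (take j t)"

lemma prefix_sum_seg_sum: "a \<le> b \<Longrightarrow> prefix_sum t b = prefix_sum t a + seg_sum t a b"
  unfolding prefix_sum_def seg_sum_def by (metis le_add_diff_inverse sum_list_append take_add)

lemma prefix_sum_Suc: "j < length t \<Longrightarrow> prefix_sum t (Suc j) = prefix_sum t j + t ! j"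
  by (simp add: prefix_sum_def take_Suc_conv_app_nth)

lemma elt_homD:
  assumes "\<phi> \<in> elt_hom s t"
  shows "length \<phi> = Suc (length s)" "sorted_wrt (<) \<phi>" "\<phi> ! 0 = 0" "\<phi> ! length s = length t"
    "\<And>i. i < length s \<Longrightarrow> s ! i = seg_sum t (\<phi> ! i) (\<phi> ! Suc i)"
  using assms by (auto simp: elt_hom_def)

lemma elt_hom_nth_mono:
  assumes "\<phi> \<in> elt_hom s t" "i \<le> j" "j \<le> length s"
  shows "\<phi> ! i \<le> \<phi> ! j"
  using assms elt_homD[OF assms(1)] sorted_wrt_nth_less[of "(<)" \<phi> i j]
  by (cases "i = j") simp_all

lemma elt_hom_nth_le_length:
  assumes "\<phi> \<in> elt_hom s t" "i \<le> length s"
  shows "\<phi> ! i \<le> length t"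
  using elt_hom_nth_mono[OF assms(1) assms(2) order_refl] elt_homD(4)[OF assms(1)] by simp

lemma elt_hom_set_le_length:
  assumes "\<phi> \<in> elt_hom s t" "x \<in> set \<phi>"
  shows "x \<le> length t"
  using assms elt_hom_nth_le_length elt_homD(1)[OF assms(1)] by (metis in_set_conv_nth less_Suc_eq_le)

lemma finite_elt_hom: "finite (elt_hom s t)"
proof -
  have "elt_hom s t \<subseteq> {xs. set xs \<subseteq> {..length t} \<and> length xs = Suc (length s)}"
    using elt_hom_set_le_length elt_homD(1) by fastforce
  then show ?thesis using finite_lists_length_eq[of "{..length t}"] finite_subset by blast
qed

lemma elt_hom_prefix_sum:
  assumes "\<phi> \<in> elt_hom s t" "i \<le> length s"
  shows "prefix_sum s i = prefix_sum t (\<phi> ! i)"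
  using assms(2)
proof (induction i)
  case 0
  then show ?case using elt_homD[OF assms(1)] by (simp add: prefix_sum_def)
next
  case (Suc i)
  then have "prefix_sum s (Suc i) = prefix_sum t (\<phi> ! i) + seg_sum t (\<phi> ! i) (\<phi> ! Suc i)"
    using elt_homD(5)[OF assms(1), of i] by (simp add: prefix_sum_Suc)
  also have "\<dots> = prefix_sum t (\<phi> ! Suc i)"
    using Suc elt_hom_nth_mono[OF assms(1), of i "Suc i"] by (simp add: prefix_sum_seg_sum)
  finally show ?case .
qed

lemma elt_homI_prefix_sum:
  fixes s t :: "'a::group_add list"
  assumes "length \<phi> = Suc (length s)" "sorted_wrt (<) \<phi>" "\<phi> ! 0 = 0" "\<phi> ! length s = length t"
    and prefix_sum_eq: "\<And>i. i \<le> length s \<Longrightarrow> prefix_sum s i = prefix_sum t (\<phi> ! i)"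
  shows "\<phi> \<in> elt_hom s t"
proof -
  have "s ! i = seg_sum t (\<phi> ! i) (\<phi> ! Suc i)" if "i < length s" for i
  proof -
    have "\<phi> ! i \<le> \<phi> ! Suc i"
      using assms(1,2) that sorted_wrt_nth_less[of "(<)" \<phi> i "Suc i"] by simp
    then have "prefix_sum t (\<phi> ! i) + s ! i = prefix_sum t (\<phi> ! i) + seg_sum t (\<phi> ! i) (\<phi> ! Suc i)"
      using that prefix_sum_eq[of i] prefix_sum_eq[of "Suc i"]
      by (simp add: prefix_sum_Suc prefix_sum_seg_sum)
    then show ?thesis by simp
  qed
  with assms show ?thesis by (simp add: elt_hom_def)
qed

lemma elt_comp_in_elt_hom:
  fixes s t u :: "'a::group_add list"
  assumes f: "f \<in> elt_hom s t" and g: "g \<in> elt_hom t u"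
  shows "elt_comp g f \<in> elt_hom s u"
proof (rule elt_homI_prefix_sum)
  note F = elt_homD[OF f] and G = elt_homD[OF g]
  show "length (elt_comp g f) = Suc (length s)" using F by (simp add: elt_comp_def)
  show "sorted_wrt (<) (elt_comp g f)"
    unfolding elt_comp_def sorted_wrt_iff_nth_less
  proof (intro allI impI)
    fix i j assume ij: "i < j" "j < length (map ((!) g) f)"
    have "f ! i < f ! j" using F ij sorted_wrt_nth_less[of "(<)" f i j] by simp
    moreover have "f ! j \<le> length t" using elt_hom_nth_le_length[OF f] ij F by simp
    ultimately have "g ! (f ! i) < g ! (f ! j)" using G sorted_wrt_nth_less[of "(<)" g] by simp
    then show "map ((!) g) f ! i < map ((!) g) f ! j" using ij by simp
  qed
  show "elt_comp g f ! 0 = 0" "elt_comp g f ! length s = length u"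
    using F G by (simp_all add: elt_comp_def)
  fix i assume i: "i \<le> length s"
  have "prefix_sum s i = prefix_sum t (f ! i)" using elt_hom_prefix_sum[OF f i] .
  also have "\<dots> = prefix_sum u (g ! (f ! i))"
    using elt_hom_prefix_sum[OF g elt_hom_nth_le_length[OF f i]] .
  finally show "prefix_sum s i = prefix_sum u (elt_comp g f ! i)" using i F by (simp add: elt_comp_def)
qed

section \<open>An admissible order\<close>

lemma lexord_map_mono:
  assumes "(xs, ys) \<in> lexord r" "\<And>x y. x \<in> set xs \<Longrightarrow> y \<in> set ys \<Longrightarrow> (x, y) \<in> r \<Longrightarrow> (F x, F y) \<in> r'"
  shows "(map F xs, map F ys) \<in> lexord r'"
  using assms
proof (induction xs arbitrary: ys)
  case Nil then show ?case by (cases ys) auto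
next
  case (Cons x xs) then show ?case by (cases ys) auto
qed

lemma elt_comp_less:
  fixes c c' c'' :: "'a::monoid_add list"
  assumes "f' \<in> elt_hom c c'" "g \<in> elt_hom c' c''" "f < f'"
  shows "elt_comp g f < elt_comp g f'"
proof -
  have "(map ((!) g) f, map ((!) g) f') \<in> lexord {(u, v). u < v}"
  proof (rule lexord_map_mono)
    show "(f, f') \<in> lexord {(u, v). u < v}" using assms(3) by (simp add: list_less_def)
    fix x y assume "y \<in> set f'" "(x, y) \<in> {(u, v). u < v}"
    then show "(g ! x, g ! y) \<in> {(u, v). u < v}"
      using elt_hom_set_le_length[OF assms(1)] elt_homD[OF assms(2)] sorted_wrt_nth_less[of "(<)" g x y]
      by (simp add: less_Suc_eq_le)
  qed
  then show ?thesis by (simp add: list_less_def elt_comp_def)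
qed

lemma well_order_on_finite:
  fixes H :: "'a::linorder set"
  assumes "finite H"
  shows "well_order_on H {(x, y). x \<in> H \<and> y \<in> H \<and> x \<le> y}"
proof -
  let ?less = "{(x, y). x \<in> H \<and> y \<in> H \<and> x < y}"
  have "?less\<^sup>+ = ?less" by (rule trancl_id) (auto simp: trans_def)
  then have "wf ?less"
    using assms by (intro finite_acyclic_wf) (auto simp: acyclic_def intro: finite_subset[of _ "H \<times> H"])
  then have "wf ({(x, y). x \<in> H \<and> y \<in> H \<and> x \<le> y} - Id)"
    by (rule wf_subset) auto
  then show ?thesis
    unfolding well_order_on_def linear_order_on_def partial_order_on_def preorder_on_def
      refl_on_def trans_def antisym_def total_on_def
    by auto
qed

lemma admissible_order_elt:
  "admissible_order (elt_obj :: 'a::group_add list set) elt_hom elt_comp c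
     (\<lambda>c'. {(x, y). x \<in> elt_hom c c' \<and> y \<in> elt_hom c c' \<and> x \<le> y})"
  unfolding admissible_order_def
proof (intro conjI ballI impI)
  fix c' :: "'a list"
  show "well_order_on (elt_hom c c') {(x, y). x \<in> elt_hom c c' \<and> y \<in> elt_hom c c' \<and> x \<le> y}"
    by (rule well_order_on_finite[OF finite_elt_hom])
next
  fix c' c'' :: "'a list" and f f' g
  assume f: "f \<in> elt_hom c c'" and f': "f' \<in> elt_hom c c'" and g: "g \<in> elt_hom c' c''"
    and "(f, f') \<in> {(x, y). x \<in> elt_hom c c' \<and> y \<in> elt_hom c c' \<and> x \<le> y} \<and> f \<noteq> f'"
  then have "f < f'"
    by (simp add: less_le)
  then have less: "elt_comp g f < elt_comp g f'"
    by (rule elt_comp_less[OF f' g])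
  show "(elt_comp g f, elt_comp g f') \<in> {(x, y). x \<in> elt_hom c c'' \<and> y \<in> elt_hom c c'' \<and> x \<le> y}"
    using elt_comp_in_elt_hom[OF f g] elt_comp_in_elt_hom[OF f' g] less_imp_le[OF less] by simp
  show "elt_comp g f \<noteq> elt_comp g f'"
    using less by simp
qed

section \<open>Noetherianity\<close>

lemma list_emb_index:
  assumes "list_emb P xs ys"
  obtains \<rho> where "\<And>i. i < length xs \<Longrightarrow> \<rho> i < length ys \<and> P (xs ! i) (ys ! \<rho> i)"
    and "\<And>i j. i < j \<Longrightarrow> j < length xs \<Longrightarrow> \<rho> i < \<rho> j"
proof -
  from assms have "\<exists>\<rho>. (\<forall>i<length xs. \<rho> i < length ys \<and> P (xs ! i) (ys ! \<rho> i)) \<and>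
     (\<forall>i j. i < j \<longrightarrow> j < length xs \<longrightarrow> \<rho> i < \<rho> j)"
  proof (induction rule: list_emb.induct)
    case (list_emb_Nil ys)
    then show ?case by simp
  next
    case (list_emb_Cons xs ys y)
    then obtain \<rho> where "\<forall>i<length xs. \<rho> i < length ys \<and> P (xs ! i) (ys ! \<rho> i)"
      "\<forall>i j. i < j \<longrightarrow> j < length xs \<longrightarrow> \<rho> i < \<rho> j" by blast
    then show ?case by (intro exI[of _ "\<lambda>i. Suc (\<rho> i)"]) auto
  next
    case (list_emb_Cons2 x y xs ys)
    then obtain \<rho> where "\<forall>i<length xs. \<rho> i < length ys \<and> P (xs ! i) (ys ! \<rho> i)"
      "\<forall>i j. i < j \<longrightarrow> j < length xs \<longrightarrow> \<rho> i < \<rho> j" by blast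
    with list_emb_Cons2.hyps show ?case
      by (intro exI[of _ "case_nat 0 (\<lambda>k. Suc (\<rho> k))"]) (auto simp: nth_Cons split: nat.split)
  qed
  with that show thesis by blast
qed

lemma sorted_wrt_less_nth_less_iff:
  fixes xs :: "'a::linorder list"
  assumes "sorted_wrt (<) xs" "i < length xs" "j < length xs"
  shows "xs ! i < xs ! j \<longleftrightarrow> i < j"
  using assms sorted_wrt_nth_less[of "(<)" xs i j] sorted_wrt_nth_less[of "(<)" xs j i]
  by (cases i j rule: linorder_cases) auto

lemma card_sorted_nth_less:
  fixes xs :: "'a::linorder list"
  assumes "sorted_wrt (<) xs" "k < length xs"
  shows "card {i. i < length xs \<and> xs ! i < xs ! k} = k"
proof -
  have "{i. i < length xs \<and> xs ! i < xs ! k} = {..<k}"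
    using assms by (auto simp: sorted_wrt_less_nth_less_iff)
  then show ?thesis by simp
qed

(* The letter at list index j describes position j + 1 of t. *)
definition hom_word :: "'a::monoid_add list \<Rightarrow> nat list \<Rightarrow> ('a \<times> nat \<times> bool) list" where
  "hom_word t \<phi> =
     map (\<lambda>j. (prefix_sum t (Suc j), card {i. i < length \<phi> \<and> \<phi> ! i \<le> j}, Suc j \<in> set \<phi>)) [0..<length t]"

lemma length_hom_word [simp]: "length (hom_word t \<phi>) = length t"
  by (simp add: hom_word_def)

lemma hom_word_nth:
  "j < length t \<Longrightarrow>
   hom_word t \<phi> ! j = (prefix_sum t (Suc j), card {i. i < length \<phi> \<and> \<phi> ! i \<le> j}, Suc j \<in> set \<phi>)"
  by (simp add: hom_word_def)

lemma hom_word_in_lists: "hom_word t \<phi> \<in> lists (UNIV \<times> {..length \<phi>} \<times> UNIV)"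
proof -
  have "card {i. i < length \<phi> \<and> \<phi> ! i \<le> j} \<le> length \<phi>" for j
    using card_mono[of "{..<length \<phi>}" "{i. i < length \<phi> \<and> \<phi> ! i \<le> j}"] by auto
  then show ?thesis by (auto simp: hom_word_def)
qed

lemma hom_word_nth_eq_imp_nth_eq:
  assumes \<phi>: "\<phi> \<in> elt_hom s t" and \<psi>: "\<psi> \<in> elt_hom s u"
    and "j < length t" "j' < length u" "hom_word t \<phi> ! j = hom_word u \<psi> ! j'"
    and "k \<le> length s" "\<phi> ! k = Suc j"
  shows "\<psi> ! k = Suc j'"
proof -
  note \<Phi> = elt_homD[OF \<phi>] and \<Psi> = elt_homD[OF \<psi>]
  have same_count: "card {i. i < length \<phi> \<and> \<phi> ! i \<le> j} = card {i. i < length \<psi> \<and> \<psi> ! i \<le> j'}"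
    and same_image: "Suc j \<in> set \<phi> \<longleftrightarrow> Suc j' \<in> set \<psi>"
    using assms(5) hom_word_nth[OF assms(3)] hom_word_nth[OF assms(4)] by simp_all
  have "Suc j \<in> set \<phi>"
    using nth_mem[of k \<phi>] \<Phi>(1) assms(6,7) by simp
  then obtain k' where k': "k' < length \<psi>" "\<psi> ! k' = Suc j'"
    using same_image by (auto simp: in_set_conv_nth)
  have "k = card {i. i < length \<phi> \<and> \<phi> ! i \<le> j}"
    using card_sorted_nth_less[of \<phi> k] \<Phi>(1,2) assms(6,7) by (simp add: less_Suc_eq_le)
  also have "\<dots> = k'"
    using same_count card_sorted_nth_less[of \<psi> k'] \<Psi>(2) k' by (simp add: less_Suc_eq_le)
  finally show ?thesis using k' by simp
qed

definition embedding_hom :: "nat \<Rightarrow> (nat \<Rightarrow> nat) \<Rightarrow> nat list" where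
  "embedding_hom n \<rho> = 0 # map (\<lambda>j. Suc (\<rho> j)) [0..<n]"

lemma embedding_hom_in_elt_hom:
  fixes t u :: "'a::group_add list"
  assumes \<rho>: "\<And>j. j < length t \<Longrightarrow> \<rho> j < length u \<and> prefix_sum t (Suc j) = prefix_sum u (Suc (\<rho> j))"
    and \<rho>_mono: "\<And>i j. i < j \<Longrightarrow> j < length t \<Longrightarrow> \<rho> i < \<rho> j"
    and last: "embedding_hom (length t) \<rho> ! length t = length u"
  shows "embedding_hom (length t) \<rho> \<in> elt_hom t u"
proof (rule elt_homI_prefix_sum)
  show "length (embedding_hom (length t) \<rho>) = Suc (length t)" "embedding_hom (length t) \<rho> ! 0 = 0"
    by (simp_all add: embedding_hom_def)
  have "sorted_wrt (<) (map (\<lambda>j. Suc (\<rho> j)) [0..<length t])"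
    unfolding sorted_wrt_iff_nth_less by (simp add: \<rho>_mono)
  then show "sorted_wrt (<) (embedding_hom (length t) \<rho>)" by (simp add: embedding_hom_def)
  show "embedding_hom (length t) \<rho> ! length t = length u" by (fact last)
  fix j assume "j \<le> length t"
  then show "prefix_sum t j = prefix_sum u (embedding_hom (length t) \<rho> ! j)"
    using \<rho> by (cases j) (simp_all add: prefix_sum_def embedding_hom_def)
qed

lemma embedding_hom_nth_comp:
  assumes \<phi>: "\<phi> \<in> elt_hom s t" and \<psi>: "\<psi> \<in> elt_hom s u"
    and \<rho>: "\<And>j. j < length t \<Longrightarrow> \<rho> j < length u \<and> hom_word t \<phi> ! j = hom_word u \<psi> ! \<rho> j"
    and k: "k \<le> length s"
  shows "embedding_hom (length t) \<rho> ! (\<phi> ! k) = \<psi> ! k"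
proof (cases "\<phi> ! k")
  case 0
  then have "k = 0"
    using elt_homD(1-3)[OF \<phi>] k sorted_wrt_less_nth_less_iff[of \<phi> 0 k] by auto
  then show ?thesis using elt_homD(3)[OF \<psi>] 0 by (simp add: embedding_hom_def)
next
  case (Suc j)
  moreover have "j < length t" using elt_hom_nth_le_length[OF \<phi> k] Suc by simp
  moreover from this have "\<psi> ! k = Suc (\<rho> j)"
    using \<rho>[of j] hom_word_nth_eq_imp_nth_eq[OF \<phi> \<psi> _ _ _ k Suc] by blast
  ultimately show ?thesis by (simp add: embedding_hom_def)
qed

lemma subseq_hom_word_imp_factor:
  fixes s t u :: "'a::group_add list"
  assumes \<phi>: "\<phi> \<in> elt_hom s t" and \<psi>: "\<psi> \<in> elt_hom s u"
    and "subseq (hom_word t \<phi>) (hom_word u \<psi>)"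
  shows "\<exists>h\<in>elt_hom t u. \<psi> = elt_comp h \<phi>"
proof -
  obtain \<rho> where \<rho>: "\<And>j. j < length t \<Longrightarrow> \<rho> j < length u \<and> hom_word t \<phi> ! j = hom_word u \<psi> ! \<rho> j"
    and \<rho>_mono: "\<And>i j. i < j \<Longrightarrow> j < length t \<Longrightarrow> \<rho> i < \<rho> j"
    using list_emb_index[OF assms(3)] by auto
  let ?h = "embedding_hom (length t) \<rho>"
  note h_\<phi> = embedding_hom_nth_comp[OF \<phi> \<psi> \<rho>]
  have "?h \<in> elt_hom t u"
  proof (rule embedding_hom_in_elt_hom)
    show "\<rho> j < length u \<and> prefix_sum t (Suc j) = prefix_sum u (Suc (\<rho> j))" if "j < length t" for j
      using \<rho>[OF that] hom_word_nth[OF that] hom_word_nth[of "\<rho> j" u \<psi>] by simp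
    show "\<rho> i < \<rho> j" if "i < j" "j < length t" for i j
      using that by (rule \<rho>_mono)
    show "?h ! length t = length u"
      using h_\<phi>[of "length s"] elt_homD(4)[OF \<phi>] elt_homD(4)[OF \<psi>] by simp
  qed
  moreover have "\<psi> = elt_comp ?h \<phi>"
    using elt_homD(1)[OF \<phi>] elt_homD(1)[OF \<psi>] h_\<phi>
    by (intro nth_equalityI) (auto simp: elt_comp_def less_Suc_eq_le)
  ultimately show ?thesis by blast
qed

lemma noetherian_out_mor_elt:
  "noetherian_on (out_mor (elt_obj :: 'a::{finite, group_add} list set) elt_hom c) (under_le elt_hom elt_comp)"
  unfolding noetherian_on_def
proof (intro allI impI)
  fix x :: "nat \<Rightarrow> 'a list \<times> nat list"
  assume "\<forall>i. x i \<in> out_mor elt_obj elt_hom c"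
  then have x: "snd (x i) \<in> elt_hom c (fst (x i))" for i
    by (auto simp: out_mor_def split: prod.splits)
  let ?w = "\<lambda>i. hom_word (fst (x i)) (snd (x i))"
  let ?alphabet = "(UNIV :: 'a set) \<times> {..Suc (length c)} \<times> (UNIV :: bool set)"
  have words: "?w i \<in> lists ?alphabet" for i
    using hom_word_in_lists[of "fst (x i)" "snd (x i)"] unfolding elt_homD(1)[OF x[of i]] .
  have "finite ?alphabet" by simp
  from noetherian_on_lists_subseq[OF this, unfolded noetherian_on_def, rule_format, OF words]
  obtain i j where "i < j" "subseq (?w i) (?w j)"
    by blast
  from subseq_hom_word_imp_factor[OF x x this(2)] \<open>i < j\<close>
  show "\<exists>i j. i < j \<and> under_le elt_hom elt_comp (x i) (x j)"
    unfolding under_le_def by blast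
qed

theorem proposition5p13:
  shows "groebner_cat (elt_obj :: 2 list set) elt_hom elt_comp"
  unfolding groebner_cat_def
proof (intro ballI conjI)
  fix c :: "2 list"
  show "\<exists>R. admissible_order elt_obj elt_hom elt_comp c R"
    by (rule exI, rule admissible_order_elt)
  show "noetherian_on (out_mor elt_obj elt_hom c) (under_le elt_hom elt_comp)"
    by (rule noetherian_out_mor_elt)
qed

end
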